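(* Let $G=\langle a\rangle\times\langle b\rangle\cong\mathbb{Z}\times\mathbb{Z}$ and let $\mathcal{A}$ be a Schur ring over $G$. If $\langle a^k\rangle$ is an $\mathcal{A}$-subgroup for some nonzero integer $k$, then $\langle a\rangle$ is an $\mathcal{A}$-subgroup.
   Context: $\mathbb{F}$ is a field of characteristic $0$. A Schur ring over a group $G$ is a subspace $\mathcal{A}\subseteq\mathbb{F}[G]$ spanned by the elements $\underline{D}=\sum_{g\in D}g$, $D\in\mathcal{D}$, where $\mathcal{D}$ is a partition of $G$ into finite subsets such that $\{1\}\in\mathcal{D}$, $D\in\mathcal{D}\Rightarrow D^{-1}\in\mathcal{D}$, and each product $\underline{D_1}\,\underline{D_2}$ is a finite $\mathbb{F}$-linear combination of the $\underline{D}$, $D\in\mathcal{D}$. The elements of $\mathcal{D}$ are basic sets; an $\mathcal{A}$-subgroup is a subgroup which is a union of basic sets. *)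

theory Defs
  imports Main "HOL-Library.Disjoint_Sets" "HOL-Library.Product_Plus"
begin

(* Groups are written additively (type class group_add); the group algebra F[G]
   is modelled by functions G => F of finite support. The element underline D of
   F[G] is the indicator function of D; the product underline D1 * underline D2
   evaluated at g is the number of pairs (x,y) in D1 x D2 with x + y = g. *)

definition set_prod_coeff :: "'g::group_add set \<Rightarrow> 'g set \<Rightarrow> 'g \<Rightarrow> nat" where
  "set_prod_coeff D1 D2 g = card {(x, y). x \<in> D1 \<and> y \<in> D2 \<and> x + y = g}"

(* Partition D of G giving rise to a Schur ring over G with coefficients in the field F
   (the type 'f); the Schur ring is the F-span of the underline D, D in D. *)
definition schur_ring :: "'f::field_char_0 itself \<Rightarrow> 'g::group_add set set \<Rightarrow> bool" where
  "schur_ring TYPE('f) \<D> \<longleftrightarrow>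
     partition_on (UNIV :: 'g set) \<D> \<and>
     (\<forall>D\<in>\<D>. finite D) \<and>
     {0} \<in> \<D> \<and>
     (\<forall>D\<in>\<D>. uminus ` D \<in> \<D>) \<and>
     (\<forall>D1\<in>\<D>. \<forall>D2\<in>\<D>. \<exists>S (c :: 'g set \<Rightarrow> 'f). finite S \<and> S \<subseteq> \<D> \<and>
        (\<forall>g. of_nat (set_prod_coeff D1 D2 g) = (\<Sum>D\<in>S. c D * (if g \<in> D then 1 else 0))))"

definition is_subgroup :: "'g::group_add set \<Rightarrow> bool" where
  "is_subgroup H \<longleftrightarrow> 0 \<in> H \<and> (\<forall>x\<in>H. \<forall>y\<in>H. x + y \<in> H \<and> - x \<in> H)"

definition A_subgroup :: "'g::group_add set set \<Rightarrow> 'g set \<Rightarrow> bool" where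
  "A_subgroup \<D> H \<longleftrightarrow> is_subgroup H \<and> (\<exists>\<B>\<subseteq>\<D>. H = \<Union>\<B>)"

end

theory Submission
  imports Defs "HOL-Library.Poly_Mapping" "HOL-Number_Theory.Number_Theory"
begin

text \<open>
  Work in the integral group ring \<open>\<int>[G]\<close>. By the Frobenius congruence
  \<open>T\<^sup>p \<equiv> pT (mod p)\<close> for the indicator of a finite set \<open>T\<close>, the dilation \<open>T \<mapsto> pT\<close>
  by a prime \<open>p\<close> maps unions of basic sets to unions of basic sets (Schur's theorem
  on multipliers), and hence so does the dilation by every power \<open>N = p\<^sup>j\<close>.

  Suppose a basic set \<open>T\<close> contains \<open>g = (m, 0)\<close> and \<open>y = (x, b)\<close> with \<open>b \<noteq> 0\<close>.
  Choose \<open>p\<close> prime to \<open>k\<close> and \<open>N = p\<^sup>j \<equiv> 1 (mod k)\<close> with \<open>N > \<bar>b\<bar>\<close>. Then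
  \<open>d = Ng - g \<in> \<langle>a\<^sup>k\<rangle>\<close> lies in a basic set \<open>B \<subseteq> \<langle>a\<^sup>k\<rangle>\<close>, and the coefficient of the
  product \<open>NT \<cdot> (-B)\<close> is positive at \<open>g = Ng - d\<close> but zero at \<open>y\<close>, because the
  second coordinates of \<open>NT + (-B)\<close> are multiples of \<open>N\<close>. This contradicts
  the constancy of that coefficient on \<open>T\<close>.
\<close>

lemma partition_on_part_unique:
  assumes "partition_on A P" "D \<in> P" "D' \<in> P" "x \<in> D" "x \<in> D'"
  shows "D = D'"
  using assms unfolding partition_on_def disjoint_def by blast

definition part_of :: "'a set set \<Rightarrow> 'a \<Rightarrow> 'a set" where
  "part_of P x = (THE D. D \<in> P \<and> x \<in> D)"

lemma part_of_eq:
  assumes "partition_on A P" "D \<in> P" "x \<in> D"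
  shows "part_of P x = D"
  unfolding part_of_def
  by (rule the_equality) (use assms partition_on_part_unique[OF assms(1)] in auto)

lemma part_of_in_partition:
  assumes "partition_on A P" "x \<in> A"
  shows "part_of P x \<in> P" and "x \<in> part_of P x"
proof -
  obtain D where "D \<in> P" "x \<in> D"
    using assms unfolding partition_on_def by blast
  then show "part_of P x \<in> P" "x \<in> part_of P x"
    using part_of_eq[OF assms(1)] by simp_all
qed

lemma schur_ring_partition: "schur_ring TYPE('f::field_char_0) \<D> \<Longrightarrow> partition_on UNIV \<D>"
  and schur_ring_finite: "schur_ring TYPE('f::field_char_0) \<D> \<Longrightarrow> D \<in> \<D> \<Longrightarrow> finite D"
  and schur_ring_uminus: "schur_ring TYPE('f::field_char_0) \<D> \<Longrightarrow> D \<in> \<D> \<Longrightarrow> uminus ` D \<in> \<D>"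
  unfolding schur_ring_def by blast+

text \<open>The indicators of distinct basic sets are linearly independent, and \<open>\<nat> \<rightarrow> 'f\<close> is
  injective in characteristic \<open>0\<close>.\<close>

lemma set_prod_coeff_const_on_basic_set:
  assumes SR: "schur_ring TYPE('f::field_char_0) \<D>"
    and "D1 \<in> \<D>" "D2 \<in> \<D>" "E \<in> \<D>" "g \<in> E" "h \<in> E"
  shows "set_prod_coeff D1 D2 g = set_prod_coeff D1 D2 h"
proof -
  obtain S and c :: "_ \<Rightarrow> 'f" where S: "finite S" "S \<subseteq> \<D>"
    and coeff: "\<And>g. of_nat (set_prod_coeff D1 D2 g) = (\<Sum>D\<in>S. c D * (if g \<in> D then 1 else 0))"
    using SR \<open>D1 \<in> \<D>\<close> \<open>D2 \<in> \<D>\<close> unfolding schur_ring_def by blast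
  have const: "(of_nat (set_prod_coeff D1 D2 x) :: 'f) = (if E \<in> S then c E else 0)"
    if "x \<in> E" for x
  proof -
    have "x \<in> D \<longleftrightarrow> D = E" if "D \<in> S" for D
      using partition_on_part_unique[OF schur_ring_partition[OF SR]] \<open>x \<in> E\<close> \<open>E \<in> \<D>\<close> that S
      by blast
    then have "(\<Sum>D\<in>S. c D * (if x \<in> D then 1 else 0)) = (\<Sum>D\<in>S. if D = E then c D else 0)"
      by (intro sum.cong) auto
    then show ?thesis using coeff S by (simp add: sum.delta)
  qed
  then have "(of_nat (set_prod_coeff D1 D2 g) :: 'f) = of_nat (set_prod_coeff D1 D2 h)"
    using const \<open>g \<in> E\<close> \<open>h \<in> E\<close> by simp
  then show ?thesis by simp
qed

definition underline :: "'g set \<Rightarrow> ('g \<Rightarrow>\<^sub>0 int)" where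
  "underline S = (\<Sum>t\<in>S. Poly_Mapping.single t 1)"

lemma lookup_underline:
  "finite S \<Longrightarrow> Poly_Mapping.lookup (underline S) g = (if g \<in> S then 1 else 0)"
  unfolding underline_def by (simp add: lookup_sum lookup_single when_def)

lemma lookup_of_int_mult: "Poly_Mapping.lookup (of_int c * z) g = c * Poly_Mapping.lookup z g"
  by (simp flip: single_of_int mult_map_scale_conv_mult add: map.rep_eq when_def)

lemma lookup_underline_mult:
  fixes A B :: "'g::ab_group_add set"
  assumes "finite A" "finite B"
  shows "Poly_Mapping.lookup (underline A * underline B) g = int (set_prod_coeff A B g)"
proof -
  have "{(x, y). x \<in> A \<and> y \<in> B \<and> x + y = g} = (A \<times> B) \<inter> {z. fst z + snd z = g}"
    by auto
  then have "int (set_prod_coeff A B g) = (\<Sum>z\<in>(A \<times> B) \<inter> {z. fst z + snd z = g}. 1)"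
    by (simp add: set_prod_coeff_def)
  also have "\<dots> = (\<Sum>z\<in>A \<times> B. if fst z + snd z = g then 1 else 0)"
    using assms by (subst sum.inter_restrict) auto
  also have "\<dots> = (\<Sum>a\<in>A. \<Sum>b\<in>B. if a + b = g then 1 else 0)"
    by (simp add: sum.cartesian_product case_prod_beta)
  also have "\<dots> = Poly_Mapping.lookup (underline A * underline B) g"
    unfolding underline_def sum_product by (simp add: mult_single lookup_sum lookup_single when_def eq_commute)
  finally show ?thesis ..
qed

definition A_element :: "'g set set \<Rightarrow> ('g \<Rightarrow>\<^sub>0 int) \<Rightarrow> bool" where
  "A_element P z \<longleftrightarrow>
     (\<forall>D\<in>P. \<forall>g\<in>D. \<forall>h\<in>D. Poly_Mapping.lookup z g = Poly_Mapping.lookup z h)"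

definition A_set :: "'g set set \<Rightarrow> 'g set \<Rightarrow> bool" where
  "A_set P S \<longleftrightarrow> finite S \<and> (\<forall>D\<in>P. \<forall>g\<in>D. \<forall>h\<in>D. g \<in> S \<longrightarrow> h \<in> S)"

lemma A_set_basic_set:
  assumes "schur_ring TYPE('f::field_char_0) \<D>" "D \<in> \<D>"
  shows "A_set \<D> D"
  using schur_ring_finite[OF assms] partition_on_part_unique[OF schur_ring_partition[OF assms(1)] assms(2)]
  unfolding A_set_def by blast

lemma A_elementI:
  "(\<And>D g h. D \<in> P \<Longrightarrow> g \<in> D \<Longrightarrow> h \<in> D \<Longrightarrow> Poly_Mapping.lookup z g = Poly_Mapping.lookup z h)
    \<Longrightarrow> A_element P z"
  unfolding A_element_def by blast

lemma A_elementD: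
  "A_element P z \<Longrightarrow> D \<in> P \<Longrightarrow> g \<in> D \<Longrightarrow> h \<in> D \<Longrightarrow> Poly_Mapping.lookup z g = Poly_Mapping.lookup z h"
  unfolding A_element_def by blast

lemma A_element_underline:
  assumes "A_set P S"
  shows "A_element P (underline S)"
proof (rule A_elementI)
  fix D g h assume "D \<in> P" "g \<in> D" "h \<in> D"
  then have "g \<in> S \<longleftrightarrow> h \<in> S" using assms unfolding A_set_def by blast
  then show "Poly_Mapping.lookup (underline S) g = Poly_Mapping.lookup (underline S) h"
    using assms by (simp add: A_set_def lookup_underline)
qed

lemma A_element_add:
  assumes "A_element P x" "A_element P y"
  shows "A_element P (x + y)"
proof (rule A_elementI)
  fix D g h assume "D \<in> P" "g \<in> D" "h \<in> D"
  with assms show "Poly_Mapping.lookup (x + y) g = Poly_Mapping.lookup (x + y) h"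
    by (simp add: lookup_add A_elementD[of P _ D g h])
qed

lemma A_element_sum: "(\<And>i. i \<in> I \<Longrightarrow> A_element P (f i)) \<Longrightarrow> A_element P (sum f I)"
proof (induction I rule: infinite_finite_induct)
  case (insert i I)
  then show ?case by (simp add: A_element_add)
qed (simp_all add: A_element_def)

lemma A_element_of_int_mult:
  assumes "A_element P x"
  shows "A_element P (of_int c * x)"
proof (rule A_elementI)
  fix D g h assume "D \<in> P" "g \<in> D" "h \<in> D"
  with assms show "Poly_Mapping.lookup (of_int c * x) g = Poly_Mapping.lookup (of_int c * x) h"
    by (simp add: lookup_of_int_mult A_elementD[of P x D g h])
qed

lemma A_element_underline_mult_basic:
  fixes \<D> :: "'g::ab_group_add set set"
  assumes SR: "schur_ring TYPE('f::field_char_0) \<D>" and "D1 \<in> \<D>" "D2 \<in> \<D>"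
  shows "A_element \<D> (underline D1 * underline D2)"
proof (rule A_elementI)
  fix E g h assume "E \<in> \<D>" "g \<in> E" "h \<in> E"
  then have "set_prod_coeff D1 D2 g = set_prod_coeff D1 D2 h"
    by (rule set_prod_coeff_const_on_basic_set[OF assms])
  then show "Poly_Mapping.lookup (underline D1 * underline D2) g
      = Poly_Mapping.lookup (underline D1 * underline D2) h"
    using schur_ring_finite[OF SR] assms(2,3) by (simp add: lookup_underline_mult)
qed

lemma A_element_obtains_sum_underlines:
  assumes P: "partition_on UNIV P" and fin: "\<And>D. D \<in> P \<Longrightarrow> finite D" and z: "A_element P z"
  obtains R c where "finite R" "R \<subseteq> P" "z = (\<Sum>D\<in>R. of_int (c D) * underline D)"
proof
  let ?R = "part_of P ` Poly_Mapping.keys z" and ?c = "\<lambda>D. Poly_Mapping.lookup z (SOME g. g \<in> D)"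
  show "finite ?R" by simp
  show R: "?R \<subseteq> P" using part_of_in_partition[OF P] by auto
  show "z = (\<Sum>D\<in>?R. of_int (?c D) * underline D)"
  proof (rule poly_mapping_eqI)
    fix g
    let ?E = "part_of P g"
    have E: "?E \<in> P" "g \<in> ?E" using part_of_in_partition[OF P] by auto
    have "Poly_Mapping.lookup (\<Sum>D\<in>?R. of_int (?c D) * underline D) g
        = (\<Sum>D\<in>?R. ?c D * (if g \<in> D then 1 else 0))"
      using R fin by (auto simp: lookup_sum lookup_of_int_mult lookup_underline intro!: sum.cong)
    also have "\<dots> = (\<Sum>D\<in>?R. if D = ?E then ?c D else 0)"
    proof (rule sum.cong)
      fix D assume "D \<in> ?R"
      then have "g \<in> D \<longleftrightarrow> D = ?E"
        using R E partition_on_part_unique[OF P, of D ?E g] by auto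
      then show "?c D * (if g \<in> D then 1 else 0) = (if D = ?E then ?c D else 0)"
        by simp
    qed simp
    also have "\<dots> = Poly_Mapping.lookup z g"
    proof (cases "?E \<in> ?R")
      case True
      have "(SOME h. h \<in> ?E) \<in> ?E" using E(2) by (rule someI)
      then have "?c ?E = Poly_Mapping.lookup z g"
        using A_elementD[OF z E(1) _ E(2)] by blast
      then show ?thesis using True by (simp add: sum.delta)
    next
      case False
      then have "g \<notin> Poly_Mapping.keys z" by blast
      then show ?thesis using False by (simp add: in_keys_iff)
    qed
    finally show "Poly_Mapping.lookup z g = Poly_Mapping.lookup (\<Sum>D\<in>?R. of_int (?c D) * underline D) g"
      by simp
  qed
qed

lemma A_element_mult:
  fixes \<D> :: "'g::ab_group_add set set"
  assumes SR: "schur_ring TYPE('f::field_char_0) \<D>" and "A_element \<D> x" "A_element \<D> y"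
  shows "A_element \<D> (x * y)"
proof -
  note P = schur_ring_partition[OF SR] and fin = schur_ring_finite[OF SR]
  obtain R c where R: "finite R" "R \<subseteq> \<D>" and x: "x = (\<Sum>D\<in>R. of_int (c D) * underline D)"
    using A_element_obtains_sum_underlines[OF P fin assms(2)] by blast
  obtain R' c' where R': "finite R'" "R' \<subseteq> \<D>" and y: "y = (\<Sum>E\<in>R'. of_int (c' E) * underline E)"
    using A_element_obtains_sum_underlines[OF P fin assms(3)] by blast
  have xy: "x * y = (\<Sum>D\<in>R. \<Sum>E\<in>R'. of_int (c D * c' E) * (underline D * underline E))"
    unfolding x y sum_product by (simp add: ac_simps)
  show ?thesis
    unfolding xy using R(2) R'(2)
    by (intro A_element_sum A_element_of_int_mult A_element_underline_mult_basic[OF SR]) blast+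
qed

lemma A_element_power:
  fixes \<D> :: "'g::ab_group_add set set"
  assumes "schur_ring TYPE('f::field_char_0) \<D>" "A_element \<D> x"
  shows "A_element \<D> (x ^ Suc n)"
proof (induction n)
  case (Suc n)
  then show ?case using A_element_mult[OF assms(1,2)] by simp
qed (simp add: assms(2))

lemma set_prod_coeff_const_on_basic_set_A_set:
  fixes \<D> :: "'g::ab_group_add set set"
  assumes SR: "schur_ring TYPE('f::field_char_0) \<D>" and S1: "A_set \<D> S1" and S2: "A_set \<D> S2"
    and "E \<in> \<D>" "g \<in> E" "h \<in> E"
  shows "set_prod_coeff S1 S2 g = set_prod_coeff S1 S2 h"
proof -
  have "A_element \<D> (underline S1 * underline S2)"
    using SR S1 S2 by (intro A_element_mult A_element_underline)
  then have "Poly_Mapping.lookup (underline S1 * underline S2) g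
      = Poly_Mapping.lookup (underline S1 * underline S2) h"
    using assms(4-6) by (rule A_elementD)
  moreover have "finite S1" "finite S2" using S1 S2 unfolding A_set_def by auto
  ultimately show ?thesis by (simp add: lookup_underline_mult)
qed

lemma prime_dvd_power_add_diff:
  fixes x y :: "'a::comm_ring_1"
  assumes p: "prime p"
  shows "of_nat p dvd (x + y) ^ p - x ^ p - y ^ p"
proof -
  define F where "F k = of_nat (p choose k) * x ^ k * y ^ (p - k)" for k
  have "1 < p" using p prime_gt_1_nat by blast
  then have "{..p} = insert 0 (insert p {1..<p})" by auto
  then have "(x + y) ^ p = F 0 + F p + (\<Sum>k\<in>{1..<p}. F k)"
    using \<open>1 < p\<close> unfolding binomial_ring F_def by (simp add: algebra_simps)
  then have eq: "(x + y) ^ p - x ^ p - y ^ p = (\<Sum>k\<in>{1..<p}. F k)"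
    unfolding F_def by simp
  have "of_nat p dvd F k" if "k \<in> {1..<p}" for k
  proof -
    have "p dvd p choose k" using that p by (intro dvd_choose_prime) auto
    then obtain c where "p choose k = p * c" ..
    then show ?thesis unfolding F_def by (simp add: mult.assoc)
  qed
  then have "of_nat p dvd (\<Sum>k\<in>{1..<p}. F k)" by (rule dvd_sum)
  then show ?thesis by (simp only: eq)
qed

lemma prime_dvd_power_sum_diff:
  fixes f :: "'b \<Rightarrow> 'a::comm_ring_1"
  assumes p: "prime p"
  shows "of_nat p dvd (\<Sum>t\<in>T. f t) ^ p - (\<Sum>t\<in>T. f t ^ p)"
proof (induction T rule: infinite_finite_induct)
  case (insert a T)
  have "(\<Sum>t\<in>insert a T. f t) ^ p - (\<Sum>t\<in>insert a T. f t ^ p)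
      = ((f a + sum f T) ^ p - f a ^ p - sum f T ^ p) + (sum f T ^ p - (\<Sum>t\<in>T. f t ^ p))"
    using insert.hyps by (simp add: algebra_simps)
  moreover have "of_nat p dvd ((f a + sum f T) ^ p - f a ^ p - sum f T ^ p) + (sum f T ^ p - (\<Sum>t\<in>T. f t ^ p))"
    by (rule dvd_add[OF prime_dvd_power_add_diff[OF p] insert.IH])
  ultimately show ?case by (simp only:)
qed (use prime_gt_0_nat[OF p] in \<open>simp_all add: power_0_left\<close>)

definition multiple :: "nat \<Rightarrow> 'g::comm_monoid_add \<Rightarrow> 'g" where
  "multiple n t = (\<Sum>i<n. t)"

lemma multiple_add: "multiple (m + n) t = multiple m t + multiple n t"
  unfolding multiple_def by (induction n) (simp_all add: add_ac)

lemma multiple_mult: "multiple (m * n) t = multiple m (multiple n t)"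
  by (induction m) (simp_all add: multiple_add, simp_all add: multiple_def add_ac)

lemma single_one_power:
  "Poly_Mapping.single t (1::'r::comm_semiring_1) ^ n = Poly_Mapping.single (multiple n t) 1"
  by (induction n) (simp_all add: multiple_def mult_single add_ac)

lemma multiple_int_prod: "multiple n t = (int n * fst t, int n * snd t)"
  unfolding multiple_def by (simp add: prod_eq_iff fst_sum snd_sum)

lemma A_set_multiple_prime:
  fixes \<D> :: "'g::ab_group_add set set"
  assumes SR: "schur_ring TYPE('f::field_char_0) \<D>" and p: "prime p"
    and inj: "inj_on (multiple p) T" and T: "A_set \<D> T"
  shows "A_set \<D> (multiple p ` T)"
proof -
  let ?pT = "multiple p ` T"
  have "finite T" "finite ?pT" using T unfolding A_set_def by auto
  have "underline ?pT = (\<Sum>t\<in>T. Poly_Mapping.single t 1 ^ p)"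
    unfolding underline_def single_one_power using inj by (simp add: sum.reindex)
  then have "of_nat p dvd underline T ^ p - underline ?pT"
    unfolding underline_def by (simp only: prime_dvd_power_sum_diff[OF p])
  then obtain w where w: "underline T ^ p = underline ?pT + of_nat p * w"
    by (metis dvdE diff_eq_eq add.commute)
  have "1 < p" using p prime_gt_1_nat by blast
  then have power: "A_element \<D> (underline T ^ p)"
    using A_element_power[OF SR A_element_underline[OF T], of "p - 1"] by simp
  have lookup_power: "Poly_Mapping.lookup (underline T ^ p) g
      = (if g \<in> ?pT then 1 else 0) + int p * Poly_Mapping.lookup w g" for g
    using lookup_of_int_mult[of "int p" w g] \<open>finite ?pT\<close>
    by (simp add: w lookup_add lookup_underline)
  have "h \<in> ?pT" if "D \<in> \<D>" "g \<in> D" "h \<in> D" "g \<in> ?pT" for D g h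
  proof (rule ccontr)
    assume "h \<notin> ?pT"
    then have "1 + int p * Poly_Mapping.lookup w g = int p * Poly_Mapping.lookup w h"
      using A_elementD[OF power that(1-3)] lookup_power[of g] lookup_power[of h] \<open>g \<in> ?pT\<close>
      by simp
    then have "1 = int p * (Poly_Mapping.lookup w h - Poly_Mapping.lookup w g)"
      by (simp add: algebra_simps)
    then have "int p dvd 1" by (rule dvdI)
    then show False using \<open>1 < p\<close> by simp
  qed
  then show ?thesis using \<open>finite ?pT\<close> unfolding A_set_def by blast
qed

lemma A_set_multiple_prime_power:
  fixes \<D> :: "'g::ab_group_add set set"
  assumes "schur_ring TYPE('f::field_char_0) \<D>" "prime p" "inj (multiple p :: 'g \<Rightarrow> 'g)" "A_set \<D> T"
  shows "A_set \<D> (multiple (p ^ j) ` T)"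
proof (induction j)
  case 0
  have "multiple (p ^ 0) ` T = T" by (simp add: multiple_def)
  then show ?case using assms(4) by simp
next
  case (Suc j)
  have "multiple (p ^ Suc j) ` T = multiple p ` multiple (p ^ j) ` T"
    by (simp add: image_image multiple_mult)
  then show ?case
    using A_set_multiple_prime[OF assms(1,2) inj_on_subset[OF assms(3) subset_UNIV] Suc] by simp
qed

lemma prime_power_cong_one:
  fixes k :: int
  assumes "k \<noteq> 0"
  obtains p j where "prime p" "B < p ^ j" "k dvd int (p ^ j) - 1"
proof -
  let ?n = "nat \<bar>k\<bar>"
  obtain p where p: "prime p" "?n < p" using bigger_prime by blast
  have "\<not> p dvd ?n"
  proof
    assume "p dvd ?n"
    then have "p \<le> ?n" by (rule dvd_imp_le) (use assms in simp)
    then show False using p(2) by simp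
  qed
  with p(1) have "coprime p ?n" by (rule prime_imp_coprime)
  define j where "j = totient ?n * (B + 1)"
  have "[(p ^ totient ?n) ^ (B + 1) = 1 ^ (B + 1)] (mod ?n)"
    using euler_theorem[OF \<open>coprime p ?n\<close>] by (rule cong_pow)
  then have "[p ^ j = 1] (mod ?n)" by (simp only: j_def power_mult power_one)
  then have "[int (p ^ j) = 1] (mod \<bar>k\<bar>)"
    by (metis cong_int_iff of_nat_1 int_nat_eq abs_ge_zero)
  then have "k dvd int (p ^ j) - 1" by (simp add: cong_iff_dvd_diff)
  moreover have "B < p ^ j"
  proof -
    have "1 \<le> totient ?n" using assms by (simp add: Suc_le_eq)
    then have "1 * (B + 1) \<le> j" unfolding j_def by (rule mult_le_mono1)
    then have "B < j" by simp
    also have "j < 2 ^ j" by (rule less_exp)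
    also have "\<dots> \<le> p ^ j" using prime_ge_2_nat[OF p(1)] by (rule power_mono) simp
    finally show ?thesis .
  qed
  ultimately show ?thesis using p that by blast
qed

lemma set_prod_coeff_gt_0:
  assumes "finite S" "finite C" "s \<in> S" "c \<in> C" "s + c = g"
  shows "set_prod_coeff S C g > 0"
proof -
  have "finite {(s, c). s \<in> S \<and> c \<in> C \<and> s + c = g}"
    using assms(1,2) by (rule finite_subset[rotated, OF finite_cartesian_product]) blast
  moreover have "(s, c) \<in> {(s, c). s \<in> S \<and> c \<in> C \<and> s + c = g}" using assms(3-5) by simp
  ultimately show ?thesis unfolding set_prod_coeff_def by (auto simp add: card_gt_0_iff)
qed

lemma set_prod_coeff_multiple_axis_eq_0:
  fixes T C :: "(int \<times> int) set"
  assumes "C \<subseteq> {(n, 0) | n. True}" "b \<noteq> 0" "\<bar>b\<bar> < int N"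
  shows "set_prod_coeff (multiple N ` T) C (x, b) = 0"
proof -
  have "s + c \<noteq> (x, b)" if s: "s \<in> multiple N ` T" and c: "c \<in> C" for s c
  proof
    assume "s + c = (x, b)"
    obtain t where t: "s = multiple N t" using s by blast
    have "snd c = 0" using c assms(1) by auto
    have "b = snd (s + c)" using \<open>s + c = (x, b)\<close> by simp
    also have "\<dots> = int N * snd t" using t \<open>snd c = 0\<close> by (simp add: multiple_int_prod)
    finally have Nt: "int N * snd t = b" ..
    with \<open>b \<noteq> 0\<close> have "int N * 1 \<le> int N * \<bar>snd t\<bar>" by (intro mult_left_mono) auto
    with Nt have "int N \<le> \<bar>b\<bar>" by (simp add: abs_mult)
    then show False using assms(3) by linarith
  qed
  then have "{(s, c). s \<in> multiple N ` T \<and> c \<in> C \<and> s + c = (x, b)} = {}" by blast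
  then show ?thesis unfolding set_prod_coeff_def by (simp only: card.empty)
qed

lemma snd_eq_0_in_basic_set_meeting_axis:
  fixes \<D> :: "(int \<times> int) set set" and k :: int
  assumes SR: "schur_ring TYPE('f::field_char_0) \<D>" and "k \<noteq> 0"
    and H: "A_subgroup \<D> {(k * n, 0) | n. True}"
    and T: "T \<in> \<D>" "(m, 0) \<in> T" "(x, b) \<in> T"
  shows "b = 0"
proof (rule ccontr)
  assume "b \<noteq> 0"
  obtain p j where p: "prime p" and "nat \<bar>b\<bar> < p ^ j" and "k dvd int (p ^ j) - 1"
    using prime_power_cong_one[OF \<open>k \<noteq> 0\<close>] by blast
  define N where "N = p ^ j"
  then have N: "\<bar>b\<bar> < int N" using \<open>nat \<bar>b\<bar> < p ^ j\<close> by linarith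
  obtain q where q: "int N - 1 = k * q" using \<open>k dvd _\<close> unfolding N_def by blast
  have "inj (multiple p :: int \<times> int \<Rightarrow> _)"
    using prime_gt_0_nat[OF p] by (intro injI) (simp add: multiple_int_prod prod_eq_iff)
  then have S: "A_set \<D> (multiple N ` T)"
    unfolding N_def by (rule A_set_multiple_prime_power[OF SR p _ A_set_basic_set[OF SR T(1)]])
  define d where "d = multiple N (m, 0) - (m, 0 :: int)"
  have "int N * m - m = k * (q * m)"
    using arg_cong[OF q, of "\<lambda>u. u * m"] by (simp add: algebra_simps)
  then have "d \<in> {(k * n, 0) | n. True}" by (simp add: d_def multiple_int_prod)
  then obtain B where B: "B \<in> \<D>" "d \<in> B" "B \<subseteq> {(k * n, 0) | n. True}"
    using H unfolding A_subgroup_def by blast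
  let ?S = "multiple N ` T" and ?C = "uminus ` B"
  have "set_prod_coeff ?S ?C (m, 0) = set_prod_coeff ?S ?C (x, b)"
    using A_set_basic_set[OF SR schur_ring_uminus[OF SR B(1)]]
    by (rule set_prod_coeff_const_on_basic_set_A_set[OF SR S _ T])
  moreover have "set_prod_coeff ?S ?C (m, 0) > 0"
  proof (rule set_prod_coeff_gt_0)
    show "finite ?S" using S unfolding A_set_def by blast
    show "finite ?C" using schur_ring_finite[OF SR B(1)] by blast
    show "multiple N (m, 0) \<in> ?S" using T(2) by (rule imageI)
    show "- d \<in> ?C" using B(2) by (rule imageI)
    show "multiple N (m, 0) + - d = (m, 0)" by (simp add: d_def)
  qed
  moreover have "set_prod_coeff ?S ?C (x, b) = 0"
    by (rule set_prod_coeff_multiple_axis_eq_0) (use B(3) \<open>b \<noteq> 0\<close> N in auto)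
  ultimately show False by simp
qed

lemma A_subgroupI:
  assumes P: "partition_on UNIV \<D>" and "is_subgroup H"
    and closed: "\<And>D. D \<in> \<D> \<Longrightarrow> D \<inter> H \<noteq> {} \<Longrightarrow> D \<subseteq> H"
  shows "A_subgroup \<D> H"
  unfolding A_subgroup_def
proof (intro conjI exI[of _ "{D \<in> \<D>. D \<subseteq> H}"])
  have "x \<in> \<Union>{D \<in> \<D>. D \<subseteq> H}" if "x \<in> H" for x
  proof -
    have "part_of \<D> x \<in> \<D>" "x \<in> part_of \<D> x" using part_of_in_partition[OF P] by auto
    moreover from this have "part_of \<D> x \<subseteq> H" using closed \<open>x \<in> H\<close> by blast
    ultimately show ?thesis by blast
  qed
  then show "H = \<Union>{D \<in> \<D>. D \<subseteq> H}" by blast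
qed (use \<open>is_subgroup H\<close> in auto)

theorem mainTheorem2:
  fixes \<D> :: "(int \<times> int) set set" and k :: int
  assumes "schur_ring TYPE('f::field_char_0) \<D>"
    and "k \<noteq> 0"
    and "A_subgroup \<D> {(k * n, 0) | n. True}"
  shows "A_subgroup \<D> {(n, 0) | n. True}"
proof (rule A_subgroupI)
  show "partition_on UNIV \<D>" using assms(1) by (rule schur_ring_partition)
  show "is_subgroup {(n, 0 :: int) | n :: int. True}"
    unfolding is_subgroup_def zero_prod_def by auto
  fix D assume "D \<in> \<D>" "D \<inter> {(n, 0) | n. True} \<noteq> {}"
  then obtain m where "(m, 0) \<in> D" by blast
  show "D \<subseteq> {(n, 0) | n. True}"
  proof
    fix y assume "y \<in> D"
    then have "snd y = 0"
      using snd_eq_0_in_basic_set_meeting_axis[OF assms \<open>D \<in> \<D>\<close> \<open>(m, 0) \<in> D\<close>, of "fst y" "snd y"]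
      by simp
    then show "y \<in> {(n, 0) | n. True}" by (cases y) simp
  qed
qed

end
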